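(* Let $F_\infty$ be the free group on a countably infinite set. Then neither $\mathrm{Aut}(F_\infty)$ nor $\mathrm{Out}(F_\infty)$ is residually finite, and neither satisfies the Tits alternative.
   Context: A group is residually finite if for every nontrivial element there is a homomorphism to a finite group not killing it. A group satisfies the Tits alternative if every subgroup either is virtually solvable or contains a nonabelian free subgroup. *)

theory Defs
  imports "HOL-Algebra.Algebra"
begin

text \<open>A letter is a pair (x, b): generator x, and b = True meaning the inverse of x.\<close>

definition inv_letter :: "'a \<times> bool \<Rightarrow> 'a \<times> bool" where
  "inv_letter l = (fst l, \<not> snd l)"

fun free_reduce :: "('a \<times> bool) list \<Rightarrow> ('a \<times> bool) list" where
  "free_reduce [] = []"
| "free_reduce (l # w) =
     (case free_reduce w of
        [] \<Rightarrow> [l]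
      | m # w' \<Rightarrow> (if m = inv_letter l then w' else l # m # w'))"

fun reduced_word :: "('a \<times> bool) list \<Rightarrow> bool" where
  "reduced_word [] = True"
| "reduced_word [l] = True"
| "reduced_word (l # m # w) = (m \<noteq> inv_letter l \<and> reduced_word (m # w))"

definition free_group :: "'a set \<Rightarrow> ('a \<times> bool) list monoid" where
  "free_group B =
     \<lparr> carrier = {w. fst ` set w \<subseteq> B \<and> reduced_word w},
       monoid.mult = (\<lambda>u v. free_reduce (u @ v)),
       one = [] \<rparr>"

abbreviation F_infty :: "(nat \<times> bool) list monoid" where
  "F_infty \<equiv> free_group (UNIV :: nat set)"

definition inner_auto :: "('a, 'b) monoid_scheme \<Rightarrow> ('a \<Rightarrow> 'a) set" where
  "inner_auto G = (\<lambda>g. \<lambda>x\<in>carrier G. g \<otimes>\<^bsub>G\<^esub> x \<otimes>\<^bsub>G\<^esub> inv\<^bsub>G\<^esub> g) ` carrier G"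

definition OutGroup :: "('a, 'b) monoid_scheme \<Rightarrow> ('a \<Rightarrow> 'a) set monoid" where
  "OutGroup G = AutoGroup G Mod inner_auto G"

text \<open>Every nontrivial element survives some homomorphism to a finite group.
  Finite target groups are taken with carrier in nat (every finite group is
  isomorphic to such a group).\<close>

definition residually_finite :: "('a, 'b) monoid_scheme \<Rightarrow> bool" where
  "residually_finite G \<longleftrightarrow>
     (\<forall>g\<in>carrier G. g \<noteq> \<one>\<^bsub>G\<^esub> \<longrightarrow>
        (\<exists>(H :: nat monoid) h. group H \<and> finite (carrier H) \<and> h \<in> hom G H \<and> h g \<noteq> \<one>\<^bsub>H\<^esub>))"

definition virtually_solvable :: "('a, 'b) monoid_scheme \<Rightarrow> bool" where
  "virtually_solvable G \<longleftrightarrow>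
     (\<exists>K. subgroup K G \<and> finite (rcosets\<^bsub>G\<^esub> K) \<and> solvable (G\<lparr>carrier := K\<rparr>))"

text \<open>Contains a nonabelian free subgroup, i.e. a subgroup isomorphic to a free
  group whose basis has at least two elements (a nonabelian free group contains
  one of countable rank, so bases in nat suffice).\<close>

definition has_nonabelian_free_subgroup :: "('a, 'b) monoid_scheme \<Rightarrow> bool" where
  "has_nonabelian_free_subgroup G \<longleftrightarrow>
     (\<exists>K (B :: nat set). subgroup K G \<and> (\<exists>x\<in>B. \<exists>y\<in>B. x \<noteq> y)
        \<and> G\<lparr>carrier := K\<rparr> \<cong> free_group B)"

definition tits_alternative :: "('a, 'b) monoid_scheme \<Rightarrow> bool" where
  "tits_alternative G \<longleftrightarrow>
     (\<forall>H. subgroup H G \<longrightarrow>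
        virtually_solvable (G\<lparr>carrier := H\<rparr>) \<or> has_nonabelian_free_subgroup (G\<lparr>carrier := H\<rparr>))"

end

theory Submission
  imports Defs "HOL-Combinatorics.Cycles"
begin

text \<open>
  Both groups contain a copy of the group of all permutations of the basis,
  acting by renaming generators; it embeds into \<open>Out(F\<^sub>\<infinity>)\<close> because a
  nontrivial renaming changes exponent sums, which conjugation preserves.
  So it suffices to study permutations of \<open>\<nat>\<close>, cut into blocks of five on
  which a 3-cycle \<open>t\<close> of \<open>A\<^sub>5\<close> acts.

  Applying \<open>t\<close> in every block gives a permutation \<open>c \<noteq> 1\<close> which, for every
  \<open>k\<close>, is the \<open>3\<^sup>k\<close>-th power of an element of order \<open>3\<^sup>k\<^sup>+\<^sup>1\<close> (cyclically
  shift groups of \<open>3\<^sup>k\<close> consecutive blocks, applying \<open>t\<close> on wrap-around). In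
  a finite quotient of order \<open>r\<close> the image of that element for \<open>k = r\<close> has
  order dividing \<open>3\<^sup>r\<close>, so \<open>c\<close> dies: no residual finiteness.

  The finitary permutations form a torsion group, so they contain no free
  subgroup. Restricting the same construction to the first \<open>3\<^sup>N\<close> blocks
  shows that a subgroup of index at most \<open>N\<close> contains a copy of the perfect
  group \<open>A\<^sub>5\<close>, hence is not solvable: the Tits alternative fails.
\<close>

section \<open>Free reduction\<close>

definition reduce_cons :: "'a \<times> bool \<Rightarrow> ('a \<times> bool) list \<Rightarrow> ('a \<times> bool) list" where
  "reduce_cons l w = (case w of [] \<Rightarrow> [l] | m # w' \<Rightarrow> (if m = inv_letter l then w' else l # m # w'))"

lemma free_reduce_Cons: "free_reduce (l # w) = reduce_cons l (free_reduce w)"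
  by (simp add: reduce_cons_def)

declare free_reduce.simps(2)[simp del] free_reduce_Cons[simp]

lemma inv_letter_inv_letter [simp]: "inv_letter (inv_letter l) = l"
  by (simp add: inv_letter_def)

lemma inv_letter_neq [simp]: "inv_letter l \<noteq> l" "l \<noteq> inv_letter l"
  by (auto simp: inv_letter_def prod_eq_iff)

lemma fst_inv_letter [simp]: "fst (inv_letter l) = fst l"
  by (simp add: inv_letter_def)

lemma reduced_word_tl: "reduced_word (m # w) \<Longrightarrow> reduced_word w"
  by (cases w) auto

lemma reduced_word_reduce_cons: "reduced_word w \<Longrightarrow> reduced_word (reduce_cons l w)"
  by (cases w) (auto simp: reduce_cons_def dest: reduced_word_tl)

lemma reduced_word_free_reduce: "reduced_word (free_reduce w)"
  by (induction w) (auto simp: reduced_word_reduce_cons)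

lemma reduce_cons_reduced: "reduced_word (l # w) \<Longrightarrow> reduce_cons l w = l # w"
  by (cases w) (auto simp: reduce_cons_def)

lemma free_reduce_reduced: "reduced_word w \<Longrightarrow> free_reduce w = w"
proof (induction w)
  case (Cons l w)
  then show ?case using reduced_word_tl reduce_cons_reduced by fastforce
qed simp

lemma free_reduce_free_reduce [simp]: "free_reduce (free_reduce w) = free_reduce w"
  by (simp add: free_reduce_reduced reduced_word_free_reduce)

lemma reduce_cons_inv_letter:
  "reduced_word w \<Longrightarrow> reduce_cons l (reduce_cons (inv_letter l) w) = w"
  by (cases w rule: reduced_word.cases) (auto simp: reduce_cons_def)

lemma free_reduce_append: "free_reduce (u @ v) = foldr reduce_cons u (free_reduce v)"
  by (induction u) auto

lemma foldr_reduce_cons_Nil: "reduced_word w \<Longrightarrow> foldr reduce_cons w [] = w"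
  using free_reduce_append[of w "[]"] by (simp add: free_reduce_reduced)

lemma reduced_word_foldr_reduce_cons:
  "reduced_word w \<Longrightarrow> reduced_word (foldr reduce_cons u w)"
  by (induction u) (auto simp: reduced_word_reduce_cons)

lemma reduce_cons_inv_letter_Cons: "reduce_cons l (inv_letter l # w) = w"
  by (simp add: reduce_cons_def)

lemma foldr_reduce_cons_reduce_cons:
  assumes "reduced_word w"
  shows "foldr reduce_cons (reduce_cons l u) w = reduce_cons l (foldr reduce_cons u w)"
proof (cases u)
  case (Cons m u')
  show ?thesis
  proof (cases "m = inv_letter l")
    case True
    then show ?thesis
      using Cons reduce_cons_inv_letter[OF reduced_word_foldr_reduce_cons[OF assms, of u'], of l]
      by (simp add: reduce_cons_inv_letter_Cons)
  qed (use Cons in \<open>simp add: reduce_cons_def\<close>)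
qed (simp add: reduce_cons_def)

lemma foldr_reduce_cons_free_reduce:
  "reduced_word w \<Longrightarrow> foldr reduce_cons (free_reduce u) w = foldr reduce_cons u w"
  by (induction u) (auto simp: foldr_reduce_cons_reduce_cons)

lemma free_reduce_assoc:
  "free_reduce (free_reduce (u @ v) @ w) = free_reduce (u @ free_reduce (v @ w))"
proof -
  have "free_reduce (free_reduce (u @ v) @ w) = foldr reduce_cons (free_reduce (u @ v)) (free_reduce w)"
    by (rule free_reduce_append)
  also have "\<dots> = foldr reduce_cons (u @ v) (free_reduce w)"
    by (rule foldr_reduce_cons_free_reduce[OF reduced_word_free_reduce])
  also have "\<dots> = foldr reduce_cons u (free_reduce (v @ w))"
    by (simp only: foldr_append o_apply free_reduce_append)
  also have "\<dots> = free_reduce (u @ free_reduce (v @ w))"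
    by (metis free_reduce_append free_reduce_free_reduce)
  finally show ?thesis .
qed

lemma letters_free_reduce: "fst ` set (free_reduce w) \<subseteq> fst ` set w"
proof (induction w)
  case (Cons l w)
  then show ?case
    by (cases "free_reduce w") (auto simp: reduce_cons_def split: if_splits)
qed simp

lemma foldr_reduce_cons_inverse:
  "reduced_word w \<Longrightarrow> foldr reduce_cons (rev (map inv_letter u)) (foldr reduce_cons u w) = w"
  by (induction u) (simp_all add: reduce_cons_inv_letter[of _ "inv_letter _", simplified]
      reduced_word_foldr_reduce_cons)

lemma free_group_carrier: "carrier (free_group B) = {w. fst ` set w \<subseteq> B \<and> reduced_word w}"
  by (simp add: free_group_def)

lemma free_group_mult: "u \<otimes>\<^bsub>free_group B\<^esub> v = free_reduce (u @ v)"
  by (simp add: free_group_def)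

lemma free_group_one: "\<one>\<^bsub>free_group B\<^esub> = []"
  by (simp add: free_group_def)

lemma group_free_group: "group (free_group B)"
proof (rule groupI)
  fix x y assume "x \<in> carrier (free_group B)" "y \<in> carrier (free_group B)"
  then show "x \<otimes>\<^bsub>free_group B\<^esub> y \<in> carrier (free_group B)"
    using letters_free_reduce[of "x @ y"]
    by (simp add: free_group_carrier free_group_mult reduced_word_free_reduce) blast
next
  fix x assume x: "x \<in> carrier (free_group B)"
  then have rx: "reduced_word x" by (simp add: free_group_carrier)
  let ?y = "free_reduce (rev (map inv_letter x))"
  have "?y \<in> carrier (free_group B)"
    using x letters_free_reduce[of "rev (map inv_letter x)"]
    by (auto simp: free_group_carrier reduced_word_free_reduce image_image)
  moreover have "free_reduce (?y @ x) = foldr reduce_cons (rev (map inv_letter x)) x"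
    using rx by (simp add: free_reduce_append foldr_reduce_cons_free_reduce free_reduce_reduced
        del: foldr_append)
  moreover have "\<dots> = []"
    using foldr_reduce_cons_inverse[of "[]" x] rx by (simp add: foldr_reduce_cons_Nil)
  ultimately show "\<exists>y\<in>carrier (free_group B). y \<otimes>\<^bsub>free_group B\<^esub> x = \<one>\<^bsub>free_group B\<^esub>"
    by (auto simp: free_group_mult free_group_one)
qed (auto simp: free_group_carrier free_group_mult free_group_one free_reduce_assoc
    free_reduce_reduced)

section \<open>Inner automorphisms\<close>

lemma AutoGroup_carrier: "carrier (AutoGroup G) = auto G"
  by (simp add: AutoGroup_def)

lemma AutoGroup_mult:
  "x \<in> auto G \<Longrightarrow> y \<in> auto G \<Longrightarrow> x \<otimes>\<^bsub>AutoGroup G\<^esub> y = compose (carrier G) x y"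
  by (simp add: AutoGroup_def BijGroup_def auto_def)

lemma AutoGroup_one: "\<one>\<^bsub>AutoGroup G\<^esub> = (\<lambda>x\<in>carrier G. x)"
  by (simp add: AutoGroup_def BijGroup_def)

context group
begin

definition inn :: "'a \<Rightarrow> 'a \<Rightarrow> 'a" where
  "inn g = (\<lambda>x\<in>carrier G. g \<otimes> x \<otimes> inv g)"

lemma inner_auto_eq: "inner_auto G = inn ` carrier G"
  by (simp add: inner_auto_def inn_def)

lemma inv_mult_cancel_left: "x \<in> carrier G \<Longrightarrow> y \<in> carrier G \<Longrightarrow> inv x \<otimes> (x \<otimes> y) = y"
  by (simp add: m_assoc[symmetric])

lemma mult_inv_cancel_left: "x \<in> carrier G \<Longrightarrow> y \<in> carrier G \<Longrightarrow> x \<otimes> (inv x \<otimes> y) = y"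
  by (simp add: m_assoc[symmetric])

lemma inn_auto: assumes g: "g \<in> carrier G" shows "inn g \<in> auto G"
proof -
  have "inn g \<in> hom G G"
    using g by (intro homI) (auto simp: inn_def m_assoc inv_mult_cancel_left)
  moreover have "bij_betw (inn g) (carrier G) (carrier G)"
    by (rule bij_betw_byWitness[where f'="\<lambda>x. inv g \<otimes> x \<otimes> g"])
      (use g in \<open>auto simp: inn_def m_assoc inv_mult_cancel_left mult_inv_cancel_left\<close>)
  ultimately show ?thesis by (simp add: auto_def Bij_def inn_def)
qed

lemma inn_mult:
  assumes "g \<in> carrier G" "h \<in> carrier G"
  shows "inn g \<otimes>\<^bsub>AutoGroup G\<^esub> inn h = inn (g \<otimes> h)"
  using assms
  by (simp add: AutoGroup_mult inn_auto)
    (auto simp: compose_def inn_def inv_mult_group m_assoc fun_eq_iff)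

lemma inn_one: "inn \<one> = \<one>\<^bsub>AutoGroup G\<^esub>"
  by (auto simp: AutoGroup_one inn_def fun_eq_iff)

lemma inn_inv:
  assumes g: "g \<in> carrier G"
  shows "inv\<^bsub>AutoGroup G\<^esub> (inn g) = inn (inv g)"
proof -
  interpret A: group "AutoGroup G" by (rule AutoGroup)
  show ?thesis
    using g by (intro A.inv_equality) (simp_all add: inn_mult inn_one AutoGroup_carrier inn_auto)
qed

lemma auto_mult_inn:
  assumes a: "a \<in> auto G" and g: "g \<in> carrier G"
  shows "a \<otimes>\<^bsub>AutoGroup G\<^esub> inn g = inn (a g) \<otimes>\<^bsub>AutoGroup G\<^esub> a"
proof -
  have ah: "a \<in> hom G G" using a by (simp add: auto_def)
  interpret h: group_hom G G a by (simp add: group_hom_def group_hom_axioms_def ah is_group)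
  have "compose (carrier G) a (inn g) = compose (carrier G) (inn (a g)) a"
    using g by (auto simp: compose_def inn_def h.hom_inv fun_eq_iff)
  then show ?thesis using a g by (simp add: AutoGroup_mult inn_auto)
qed

lemma inner_auto_normal: "inner_auto G \<lhd> AutoGroup G"
proof -
  interpret A: group "AutoGroup G" by (rule AutoGroup)
  have sub: "subgroup (inner_auto G) (AutoGroup G)"
  proof (rule A.subgroupI)
    show "inner_auto G \<subseteq> carrier (AutoGroup G)"
      by (auto simp: inner_auto_eq AutoGroup_carrier inn_auto)
  qed (auto simp: inner_auto_eq inn_inv inn_mult)
  show ?thesis
    unfolding A.normal_inv_iff
  proof (intro conjI ballI sub)
    fix a h assume a: "a \<in> carrier (AutoGroup G)" and "h \<in> inner_auto G"
    then obtain g where g: "g \<in> carrier G" "h = inn g" by (auto simp: inner_auto_eq)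
    have ag: "a g \<in> carrier G"
      using a g by (auto simp: AutoGroup_carrier auto_def hom_def)
    have i: "inn (a g) \<in> carrier (AutoGroup G)"
      using ag by (simp add: AutoGroup_carrier inn_auto)
    have "a \<otimes>\<^bsub>AutoGroup G\<^esub> h \<otimes>\<^bsub>AutoGroup G\<^esub> inv\<^bsub>AutoGroup G\<^esub> a = inn (a g)"
      using a g auto_mult_inn[of a g] A.m_assoc[OF i a A.inv_closed[OF a]] A.r_inv[OF a] A.r_one[OF i]
      by (simp add: AutoGroup_carrier)
    then show "a \<otimes>\<^bsub>AutoGroup G\<^esub> h \<otimes>\<^bsub>AutoGroup G\<^esub> inv\<^bsub>AutoGroup G\<^esub> a \<in> inner_auto G"
      using ag by (simp add: inner_auto_eq)
  qed
qed

lemma group_OutGroup: "group (OutGroup G)"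
  unfolding OutGroup_def by (rule normal.factorgroup_is_group[OF inner_auto_normal])

end

section \<open>Automorphisms of \<open>F\<^sub>\<infinity>\<close> permuting the basis\<close>

lemma carrier_F_infty: "carrier F_infty = {w. reduced_word w}"
  by (simp add: free_group_carrier)

definition rename_letter :: "('a \<Rightarrow> 'b) \<Rightarrow> 'a \<times> bool \<Rightarrow> 'b \<times> bool" where
  "rename_letter \<sigma> l = (\<sigma> (fst l), snd l)"

lemma rename_letter_id [simp]: "rename_letter id = id"
  by (simp add: rename_letter_def fun_eq_iff)

lemma rename_letter_eq_inv_letter_iff:
  "inj \<sigma> \<Longrightarrow> rename_letter \<sigma> m = inv_letter (rename_letter \<sigma> l) \<longleftrightarrow> m = inv_letter l"
  by (auto simp: rename_letter_def inv_letter_def inj_eq prod_eq_iff)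

lemma free_reduce_map_rename_letter:
  "inj \<sigma> \<Longrightarrow> free_reduce (map (rename_letter \<sigma>) w) = map (rename_letter \<sigma>) (free_reduce w)"
proof (induction w)
  case (Cons l w)
  then show ?case
    by (cases "free_reduce w") (auto simp: reduce_cons_def rename_letter_eq_inv_letter_iff)
qed simp

lemma reduced_word_map_rename_letter:
  "inj \<sigma> \<Longrightarrow> reduced_word (map (rename_letter \<sigma>) w) = reduced_word w"
  by (induction w rule: reduced_word.induct) (auto simp: rename_letter_eq_inv_letter_iff)

definition perm_auto :: "(nat \<Rightarrow> nat) \<Rightarrow> (nat \<times> bool) list \<Rightarrow> (nat \<times> bool) list" where
  "perm_auto \<sigma> = (\<lambda>w\<in>carrier F_infty. map (rename_letter \<sigma>) w)"

lemma perm_auto_letter [simp]: "perm_auto \<sigma> [(x, b)] = [(\<sigma> x, b)]"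
  by (simp add: perm_auto_def carrier_F_infty rename_letter_def)

lemma perm_auto_auto:
  assumes "bij \<sigma>"
  shows "perm_auto \<sigma> \<in> auto F_infty"
proof -
  have inj: "inj \<sigma>" "inj (inv_into UNIV \<sigma>)"
    using assms bij_imp_bij_inv bij_is_inj by blast+
  have "perm_auto \<sigma> \<in> hom F_infty F_infty"
    using inj
    by (intro homI) (simp_all add: perm_auto_def carrier_F_infty free_group_mult
        reduced_word_map_rename_letter reduced_word_free_reduce,
        metis free_reduce_map_rename_letter map_append)
  moreover have "bij_betw (perm_auto \<sigma>) (carrier F_infty) (carrier F_infty)"
    by (rule bij_betw_byWitness[where f'="map (rename_letter (inv_into UNIV \<sigma>))"])
      (use assms inj in \<open>auto simp: perm_auto_def rename_letter_def carrier_F_infty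
        reduced_word_map_rename_letter bij_is_surj surj_f_inv_f intro!: map_idI\<close>)
  ultimately show ?thesis by (simp add: auto_def Bij_def perm_auto_def)
qed

lemma perm_auto_comp:
  assumes "bij \<sigma>" "bij \<tau>"
  shows "perm_auto (\<sigma> \<circ> \<tau>) = perm_auto \<sigma> \<otimes>\<^bsub>AutoGroup F_infty\<^esub> perm_auto \<tau>"
proof -
  have "perm_auto (\<sigma> \<circ> \<tau>) = compose (carrier F_infty) (perm_auto \<sigma>) (perm_auto \<tau>)"
    using perm_auto_auto[OF assms(2)]
    by (auto simp: perm_auto_def compose_def rename_letter_def auto_def hom_def Pi_def fun_eq_iff)
  then show ?thesis using assms by (simp add: AutoGroup_mult perm_auto_auto)
qed

lemma perm_auto_id: "perm_auto id = \<one>\<^bsub>AutoGroup F_infty\<^esub>"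
  by (simp add: perm_auto_def AutoGroup_one)

definition letter_exp :: "'a \<Rightarrow> 'a \<times> bool \<Rightarrow> int" where
  "letter_exp x l = (if fst l = x then (if snd l then -1 else 1) else 0)"

definition exp_sum :: "'a \<Rightarrow> ('a \<times> bool) list \<Rightarrow> int" where
  "exp_sum x w = sum_list (map (letter_exp x) w)"

lemma exp_sum_simps [simp]:
  "exp_sum x [] = 0" "exp_sum x (l # w) = letter_exp x l + exp_sum x w"
  "exp_sum x (u @ v) = exp_sum x u + exp_sum x v"
  by (simp_all add: exp_sum_def)

lemma exp_sum_free_reduce: "exp_sum x (free_reduce w) = exp_sum x w"
proof (induction w)
  case (Cons l w)
  then show ?case
    by (cases "free_reduce w") (auto simp: reduce_cons_def letter_exp_def inv_letter_def)
qed simp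

lemma exp_sum_conj:
  assumes "g \<in> carrier (free_group B)" "h \<in> carrier (free_group B)"
  shows "exp_sum x (g \<otimes>\<^bsub>free_group B\<^esub> h \<otimes>\<^bsub>free_group B\<^esub> inv\<^bsub>free_group B\<^esub> g) = exp_sum x h"
proof -
  interpret F: group "free_group B" by (rule group_free_group)
  have "exp_sum x (inv\<^bsub>free_group B\<^esub> g) + exp_sum x g = exp_sum x \<one>\<^bsub>free_group B\<^esub>"
    using assms by (simp del: F.l_inv add: F.l_inv[symmetric] free_group_mult exp_sum_free_reduce)
  then show ?thesis
    by (simp add: free_group_mult exp_sum_free_reduce free_group_one)
qed

lemma perm_auto_not_inner:
  assumes "\<sigma> x \<noteq> x"
  shows "perm_auto \<sigma> \<notin> inner_auto F_infty"
proof
  interpret F: group F_infty by (rule group_free_group)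
  assume "perm_auto \<sigma> \<in> inner_auto F_infty"
  then obtain g where g: "g \<in> carrier F_infty" and eq: "perm_auto \<sigma> = F.inn g"
    by (auto simp: F.inner_auto_eq)
  have x: "[(x, False)] \<in> carrier F_infty" by (simp add: carrier_F_infty)
  have "exp_sum x (perm_auto \<sigma> [(x, False)]) = 0"
    using assms by (simp add: letter_exp_def)
  moreover have "exp_sum x (F.inn g [(x, False)]) = 1"
    using exp_sum_conj[OF g x, of x] x by (simp add: F.inn_def letter_exp_def)
  ultimately show False using eq by simp
qed

section \<open>Obstructions to residual finiteness and to the Tits alternative\<close>

definition has_pow_root :: "('a, 'b) monoid_scheme \<Rightarrow> nat \<Rightarrow> nat \<Rightarrow> 'a \<Rightarrow> bool" where
  "has_pow_root G p k s \<longleftrightarrow>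
     (\<exists>x\<in>carrier G. x [^]\<^bsub>G\<^esub> (p ^ Suc k) = \<one>\<^bsub>G\<^esub> \<and> x [^]\<^bsub>G\<^esub> (p ^ k) = s)"

lemma dvd_prime_power_Suc_less:
  fixes p :: nat
  assumes "Factorial_Ring.prime p" "d dvd p ^ Suc k" "d < p ^ Suc k"
  shows "d dvd p ^ k"
proof -
  obtain i where "i \<le> Suc k" "d = p ^ i"
    using assms(1,2) divides_primepow_nat by blast
  moreover have "i \<noteq> Suc k" using assms(3) calculation by auto
  ultimately show ?thesis by (simp add: le_imp_power_dvd)
qed

lemma less_prime_power_self: "Factorial_Ring.prime (p::nat) \<Longrightarrow> n < p ^ n"
  using less_exp[of n] power_mono[of 2 p n] prime_ge_2_nat[of p] by linarith

lemma (in group) subgroup_nat_pow_closed: "subgroup H G \<Longrightarrow> h \<in> H \<Longrightarrow> h [^] (n::nat) \<in> H"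
  using subgroup_int_pow_closed[of H h "int n"] by (simp add: int_pow_int)

lemma (in group) not_residually_finite_if_pow_roots:
  assumes p: "Factorial_Ring.prime p" and c: "c \<in> carrier G" "c \<noteq> \<one>" and roots: "\<And>k. has_pow_root G p k c"
  shows "\<not> residually_finite G"
proof
  assume "residually_finite G"
  then obtain H :: "nat monoid" and h where H: "group H" "finite (carrier H)" "h \<in> hom G H"
    and hc: "h c \<noteq> \<one>\<^bsub>H\<^esub>"
    using c unfolding residually_finite_def by blast
  interpret H: group H by (rule H(1))
  interpret h: group_hom G H h by (simp add: group_hom_def group_hom_axioms_def H is_group)
  let ?r = "order H"
  obtain x where x: "x \<in> carrier G" "x [^] (p ^ Suc ?r) = \<one>" "x [^] (p ^ ?r) = c"
    using roots[of ?r] by (auto simp: has_pow_root_def)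
  have hx: "h x \<in> carrier H" using x by simp
  have "h x [^]\<^bsub>H\<^esub> (p ^ Suc ?r) = \<one>\<^bsub>H\<^esub>"
    using x h.hom_nat_pow[of x "p ^ Suc ?r"] by simp
  then have "H.ord (h x) dvd p ^ Suc ?r"
    using H.pow_eq_id[OF hx] by simp
  moreover have "H.ord (h x) < p ^ Suc ?r"
  proof -
    have "p ^ ?r \<le> p ^ Suc ?r" using prime_gt_0_nat[OF p] by simp
    then show ?thesis
      using H.ord_le_group_order[OF H(2) hx] less_prime_power_self[OF p, of ?r] by linarith
  qed
  ultimately have "H.ord (h x) dvd p ^ ?r" by (rule dvd_prime_power_Suc_less[OF p])
  then have "h c = \<one>\<^bsub>H\<^esub>"
    using x h.hom_nat_pow[of x "p ^ ?r"] H.pow_eq_id[OF hx] by simp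
  with hc show False ..
qed

lemma (in group) pow_in_finite_index_subgroup:
  assumes K: "subgroup K G" and fin: "finite (rcosets K)" and x: "x \<in> carrier G"
  shows "\<exists>j>0. j \<le> card (rcosets K) \<and> x [^] (j::nat) \<in> K"
proof -
  let ?m = "card (rcosets K)"
  let ?coset = "\<lambda>i::nat. K #> x [^] i"
  have "?coset ` {0..?m} \<subseteq> rcosets K" using K x by (auto intro!: rcosetsI subgroup.subset)
  then have "\<not> inj_on ?coset {0..?m}"
    using card_inj_on_le[OF _ _ fin, of ?coset "{0..?m}"] by auto
  then obtain i l where il: "i \<le> ?m" "l \<le> ?m" "i < l" "?coset i = ?coset l"
    unfolding inj_on_def by (metis atLeastAtMost_iff linorder_neqE_nat)
  have "x [^] l \<in> K #> x [^] i" using il(4) rcos_self[OF _ K, of "x [^] l"] x by simp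
  then have "x [^] l \<otimes> inv (x [^] i) \<in> K"
    using subgroup.rcos_module_imp[OF K is_group, of "x [^] i" "x [^] l"] x by simp
  moreover have "x [^] l = x [^] (l - i) \<otimes> x [^] i" using il(3) x by (simp add: nat_pow_mult)
  ultimately have "x [^] (l - i) \<in> K" using x by (simp add: m_assoc)
  then show ?thesis using il by (intro exI[of _ "l - i"]) auto
qed

lemma (in group) pow_root_in_finite_index_subgroup:
  assumes p: "Factorial_Ring.prime p" and K: "subgroup K G" and fin: "finite (rcosets K)"
    and index: "card (rcosets K) < p ^ Suc k" and root: "has_pow_root G p k s"
  shows "s \<in> K"
proof -
  obtain x where x: "x \<in> carrier G" "x [^] (p ^ Suc k) = \<one>" "x [^] (p ^ k) = s"
    using root by (auto simp: has_pow_root_def)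
  obtain j :: nat where j: "0 < j" "j < p ^ Suc k" "x [^] j \<in> K"
    using pow_in_finite_index_subgroup[OF K fin x(1)] index by fastforce
  let ?g = "gcd j (p ^ Suc k)"
  have "?g \<le> j" using j(1) by (simp add: gcd_le1_nat)
  then have "?g dvd p ^ k"
    using dvd_prime_power_Suc_less[OF p gcd_dvd2] j(2) by simp
  then obtain c where c: "p ^ k = ?g * c" by blast
  obtain u v where uv: "j * u = p ^ Suc k * v + ?g" using bezout_nat[of j "p ^ Suc k"] j by auto
  have "j * (u * c) = p ^ Suc k * (v * c) + p ^ k"
    using uv c by (metis add_mult_distrib mult.assoc)
  then have "(x [^] j) [^] (u * c) = (x [^] (p ^ Suc k)) [^] (v * c) \<otimes> x [^] (p ^ k)"
    using x(1) by (simp only: nat_pow_pow nat_pow_mult)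
  then have "(x [^] j) [^] (u * c) = s"
    using x nat_pow_closed[OF x(1), of "p ^ k"] by simp
  then show ?thesis using subgroup_nat_pow_closed[OF K j(3)] by metis
qed

lemma (in group) subset_derived_if_commutators:
  assumes K: "subgroup K G" and "S \<subseteq> K"
    and comm: "\<forall>s\<in>S. \<exists>a\<in>S. \<exists>b\<in>S. s = a \<otimes> b \<otimes> inv a \<otimes> inv b"
  shows "S \<subseteq> (derived (G\<lparr>carrier := K\<rparr>) ^^ n) K"
proof (induction n)
  case (Suc n)
  show ?case
  proof
    fix s assume "s \<in> S"
    then obtain a b where ab: "a \<in> S" "b \<in> S" "s = a \<otimes> b \<otimes> inv a \<otimes> inv b" using comm by blast
    then have "a \<in> K" "b \<in> K" using \<open>S \<subseteq> K\<close> by auto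
    then have "s = a \<otimes>\<^bsub>G\<lparr>carrier := K\<rparr>\<^esub> b \<otimes>\<^bsub>G\<lparr>carrier := K\<rparr>\<^esub> inv\<^bsub>G\<lparr>carrier := K\<rparr>\<^esub> a
        \<otimes>\<^bsub>G\<lparr>carrier := K\<rparr>\<^esub> inv\<^bsub>G\<lparr>carrier := K\<rparr>\<^esub> b"
      using ab(3) K by simp
    then have "s \<in> derived_set (G\<lparr>carrier := K\<rparr>) ((derived (G\<lparr>carrier := K\<rparr>) ^^ n) K)"
      using ab Suc.IH by blast
    then show "s \<in> (derived (G\<lparr>carrier := K\<rparr>) ^^ Suc n) K"
      by (simp add: derived_def generate.incl)
  qed
qed (use assms in simp)

lemma (in group) not_virtually_solvable_if_perfect_pow_roots:
  assumes p: "Factorial_Ring.prime p"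
    and sets: "\<And>N. \<exists>S\<subseteq>carrier G. S \<noteq> {} \<and> S \<noteq> {\<one>}
       \<and> (\<forall>s\<in>S. \<exists>a\<in>S. \<exists>b\<in>S. s = a \<otimes> b \<otimes> inv a \<otimes> inv b)
       \<and> (\<forall>s\<in>S. \<exists>k. N < p ^ Suc k \<and> has_pow_root G p k s)"
  shows "\<not> virtually_solvable G"
proof
  assume "virtually_solvable G"
  then obtain K where K: "subgroup K G" and fin: "finite (rcosets K)"
    and sol: "solvable (G\<lparr>carrier := K\<rparr>)"
    unfolding virtually_solvable_def by blast
  obtain S where S: "S \<subseteq> carrier G" "S \<noteq> {}" "S \<noteq> {\<one>}"
    and comm: "\<forall>s\<in>S. \<exists>a\<in>S. \<exists>b\<in>S. s = a \<otimes> b \<otimes> inv a \<otimes> inv b"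
    and roots: "\<forall>s\<in>S. \<exists>k. card (rcosets K) < p ^ Suc k \<and> has_pow_root G p k s"
    using sets[of "card (rcosets K)"] by blast
  have "S \<subseteq> K"
    using roots pow_root_in_finite_index_subgroup[OF p K fin] by blast
  interpret K: group "G\<lparr>carrier := K\<rparr>" by (rule subgroup.subgroup_is_group[OF K is_group])
  obtain n where "(derived (G\<lparr>carrier := K\<rparr>) ^^ n) K = {\<one>}"
    using sol K.solvable_iff_trivial_derived_seq by auto
  then show False
    using subset_derived_if_commutators[OF K \<open>S \<subseteq> K\<close> comm, of n] S(2,3) by auto
qed

lemma free_reduce_replicate_snoc: "free_reduce (replicate n l @ [l]) = replicate (Suc n) l"
  by (induction n) (auto simp: reduce_cons_def)

lemma (in group) torsion_imp_no_nonabelian_free_subgroup: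
  assumes torsion: "\<And>g. g \<in> carrier G \<Longrightarrow> \<exists>n>0. g [^] (n::nat) = \<one>"
  shows "\<not> has_nonabelian_free_subgroup G"
proof
  assume "has_nonabelian_free_subgroup G"
  then obtain K and B :: "nat set" and x where K: "subgroup K G" and x: "x \<in> B"
    and "G\<lparr>carrier := K\<rparr> \<cong> free_group B"
    unfolding has_nonabelian_free_subgroup_def by blast
  then obtain \<phi> where \<phi>: "\<phi> \<in> iso (G\<lparr>carrier := K\<rparr>) (free_group B)"
    by (auto simp: is_iso_def)
  have hom: "\<And>a b. a \<in> K \<Longrightarrow> b \<in> K \<Longrightarrow> \<phi> (a \<otimes> b) = free_reduce (\<phi> a @ \<phi> b)"
    using \<phi> by (simp add: iso_def hom_def free_group_mult)
  have "[(x, False)] \<in> \<phi> ` K"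
    using x \<phi> by (simp add: free_group_carrier iso_def bij_betw_def)
  then obtain g where g: "g \<in> K" "\<phi> g = [(x, False)]" by (metis imageE)
  have gc: "g \<in> carrier G" using K g subgroup.subset by blast
  have pow: "\<phi> (g [^] Suc m) = replicate (Suc m) (x, False)" for m
  proof (induction m)
    case (Suc m)
    have "\<phi> (g [^] Suc (Suc m)) = free_reduce (\<phi> (g [^] Suc m) @ \<phi> g)"
      unfolding nat_pow_Suc[of g "Suc m"]
      by (rule hom[OF subgroup_nat_pow_closed[OF K g(1)] g(1)])
    then show ?case by (simp only: Suc.IH g(2) free_reduce_replicate_snoc)
  qed (use gc g in simp)
  obtain n :: nat where n: "n > 0" "g [^] n = \<one>" using torsion[OF gc] by blast
  then have "g [^] Suc n = g" using gc by simp
  then show False using pow[of n] g n(1) by simp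
qed

section \<open>Permutations of \<open>\<nat>\<close> acting on blocks of five\<close>

text \<open>Write \<open>n = 5 (L a + b) + q\<close> with \<open>q < 5\<close> and \<open>b < L\<close>: \<open>n\<close> is point \<open>q\<close> of
  block \<open>b\<close> of segment \<open>a\<close>, a segment consisting of \<open>L\<close> consecutive blocks.
  On the segments \<open>a \<in> A\<close>, \<open>block_perm A L t\<close> applies \<open>t\<close> inside every block,
  while \<open>block_shift A L t\<close> moves each block to the next one, applying \<open>t\<close>
  when wrapping around from the last block to the first.\<close>

definition block_perm :: "nat set \<Rightarrow> nat \<Rightarrow> (nat \<Rightarrow> nat) \<Rightarrow> nat \<Rightarrow> nat" where
  "block_perm A L t n = (if n div 5 div L \<in> A then 5 * (n div 5) + t (n mod 5) else n)"

definition block_shift :: "nat set \<Rightarrow> nat \<Rightarrow> (nat \<Rightarrow> nat) \<Rightarrow> nat \<Rightarrow> nat" where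
  "block_shift A L t n =
     (if n div 5 div L \<in> A then
        (if Suc (n div 5 mod L) < L then n + 5 else 5 * (L * (n div 5 div L)) + t (n mod 5))
      else n)"

lemma block_perm_comp:
  assumes "u permutes {..<5}"
  shows "block_perm A L (t \<circ> u) = block_perm A L t \<circ> block_perm A L u"
proof
  fix n :: nat
  have "u (n mod 5) < 5" using permutes_in_image[OF assms] by simp
  then show "block_perm A L (t \<circ> u) n = (block_perm A L t \<circ> block_perm A L u) n"
    by (simp add: block_perm_def)
qed

lemma block_perm_id: "block_perm A L id = id"
  by (simp add: block_perm_def fun_eq_iff)

lemma block_perm_funpow:
  "t permutes {..<5} \<Longrightarrow> block_perm A L t ^^ k = block_perm A L (t ^^ k)"
  by (induction k) (simp_all add: block_perm_id block_perm_comp[symmetric] permutes_funpow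
      funpow_Suc_right del: funpow.simps(2))

lemma block_perm_UNIV: "block_perm UNIV L t = block_perm UNIV 1 t"
  by (simp add: block_perm_def fun_eq_iff)

lemma block_perm_moves: "q < 5 \<Longrightarrow> t q \<noteq> q \<Longrightarrow> 0 \<in> A \<Longrightarrow> block_perm A L t q \<noteq> q"
  by (simp add: block_perm_def)

lemma block_shift_step:
  assumes "b < L" "q < 5" "a \<in> A"
  shows "block_shift A L t (5 * (L * a + b) + q) =
     (if Suc b < L then 5 * (L * a + Suc b) + q else 5 * (L * a) + t q)"
proof -
  have "(5 * (L * a + b) + q) div 5 = L * a + b" "(5 * (L * a + b) + q) mod 5 = q"
    using assms(2) by presburger+
  moreover have "(L * a + b) div L = a" "(L * a + b) mod L = b"
    using assms(1) by simp_all
  ultimately show ?thesis using assms(3) by (simp add: block_shift_def)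
qed

lemma block_shift_funpow:
  assumes t: "t permutes {..<5}" and b: "b < L" and q: "q < 5" and a: "a \<in> A" and i: "i \<le> L"
  shows "(block_shift A L t ^^ i) (5 * (L * a + b) + q) =
     (if b + i < L then 5 * (L * a + (b + i)) + q else 5 * (L * a + (b + i - L)) + t q)"
  using i
proof (induction i)
  case (Suc i)
  have tq: "t q < 5" using permutes_in_image[OF t] q by simp
  show ?case
  proof (cases "b + i < L")
    case True
    then show ?thesis
      using Suc block_shift_step[OF True q a] by (simp add: add.commute)
  next
    case False
    then have "b + i - L < L" "Suc (b + i - L) < L" using Suc.prems b by linarith+
    then show ?thesis
      using Suc False block_shift_step[OF _ tq a, of "b + i - L"] by (simp add: Suc_diff_le)
  qed
qed (use b in simp)

lemma block_shift_funpow_L: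
  assumes L: "0 < L" and t: "t permutes {..<5}"
  shows "block_shift A L t ^^ L = block_perm A L t"
proof
  fix n
  show "(block_shift A L t ^^ L) n = block_perm A L t n"
  proof (cases "n div 5 div L \<in> A")
    case True
    define a b q where "a = n div 5 div L" and "b = n div 5 mod L" and "q = n mod 5"
    have n: "5 * (L * a + b) + q = n" and nd: "n div 5 = L * a + b"
      by (simp_all add: a_def b_def q_def)
    have "b < L" "q < 5" using L by (simp_all add: b_def q_def)
    then have "(block_shift A L t ^^ L) (5 * (L * a + b) + q) = 5 * (L * a + b) + t q"
      using block_shift_funpow[OF t, of b L q a A L] True by (simp add: a_def)
    then show ?thesis
      using True unfolding block_perm_def nd q_def[symmetric] by (simp only: n if_True)
  next
    case False
    then have "(block_shift A L t ^^ i) n = n" for i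
      by (induction i) (simp_all add: block_shift_def)
    then show ?thesis using False by (simp add: block_perm_def)
  qed
qed

lemma bij_if_funpow_eq_id: "f ^^ Suc k = id \<Longrightarrow> bij f"
  by (metis funpow_Suc_right funpow.simps(2) o_bij)

context
  fixes t :: "nat \<Rightarrow> nat"
  assumes t_permutes: "t permutes {..<5}" and t_cube: "t ^^ 3 = id"
begin

lemma block_perm_cube: "block_perm A L t ^^ 3 = id"
  by (simp add: block_perm_funpow[OF t_permutes] t_cube block_perm_id)

lemma block_perm_cube_comp: "block_perm A L t \<circ> block_perm A L t \<circ> block_perm A L t = id"
  using block_perm_cube by (simp add: numeral_3_eq_3 o_assoc)

lemma block_shift_funpow_3L: "0 < L \<Longrightarrow> block_shift A L t ^^ (L * 3) = id"
  by (simp add: funpow_mult[symmetric] block_shift_funpow_L t_permutes block_perm_cube)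

lemma bij_block_perm: "bij (block_perm A L t)"
  using block_perm_cube by (intro bij_if_funpow_eq_id[where k=2]) (simp add: numeral_3_eq_3)

lemma bij_block_shift: "0 < L \<Longrightarrow> bij (block_shift A L t)"
  using block_shift_funpow_3L bij_if_funpow_eq_id by (metis Suc_pred nat_0_less_mult_iff zero_less_numeral)

lemma permutation_block_perm: "0 < L \<Longrightarrow> permutation (block_perm {0} L t)"
  unfolding permutation
  by (rule conjI[OF bij_block_perm finite_subset[of _ "{..<5 * L}"]])
    (auto simp: block_perm_def div_eq_0_iff split: if_splits)

lemma permutation_block_shift: "0 < L \<Longrightarrow> permutation (block_shift {0} L t)"
  unfolding permutation
  by (rule conjI[OF bij_block_shift finite_subset[of _ "{..<5 * L}"]])
    (auto simp: block_shift_def div_eq_0_iff split: if_splits)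

end

text \<open>For 3-cycles, \<open>cycle_comm\<close> is the commutator, since squaring inverts them.\<close>

definition cycle_comm :: "'a list \<Rightarrow> 'a list \<Rightarrow> 'a \<Rightarrow> 'a" where
  "cycle_comm as bs = cycle_of_list as \<circ> cycle_of_list bs
     \<circ> (cycle_of_list as \<circ> cycle_of_list as) \<circ> (cycle_of_list bs \<circ> cycle_of_list bs)"

definition a5_cycles :: "nat list list" where
  "a5_cycles = [[2,3,4], [1,2,3], [0,1,3], [0,2,1], [0,2,4], [0,4,3]]"

lemma a5_cycle_permutes: "cs \<in> set a5_cycles \<Longrightarrow> cycle_of_list cs permutes {..<5}"
  by (rule permutes_subset[OF cycle_permutes]) (auto simp: a5_cycles_def)

lemma a5_cycle_cube: "cs \<in> set a5_cycles \<Longrightarrow> cycle_of_list cs ^^ 3 = id"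
proof -
  assume "cs \<in> set a5_cycles"
  then have "distinct cs" "length cs = 3" by (auto simp: a5_cycles_def)
  then show ?thesis using cycle_is_id_root by metis
qed

lemma ext_less_5:
  "(\<And>q. q < 5 \<Longrightarrow> f q = g q) \<Longrightarrow> (\<And>q. \<not> q < 5 \<Longrightarrow> f q = g q) \<Longrightarrow> f = (g :: nat \<Rightarrow> 'a)"
  by (metis ext)

lemma less_5_cases: "q < (5::nat) \<Longrightarrow> q = 0 \<or> q = 1 \<or> q = 2 \<or> q = 3 \<or> q = 4"
  by auto

lemma a5_cycle_commutator:
  assumes "cs \<in> set a5_cycles"
  shows "\<exists>as\<in>set a5_cycles. \<exists>bs\<in>set a5_cycles. cycle_of_list cs = cycle_comm as bs"
proof -
  have "cycle_of_list [2,3,4] = cycle_comm [1,2,3] [0,2,4::nat]"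
    and "cycle_of_list [1,2,3] = cycle_comm [2,3,4] [0,2,1::nat]"
    and "cycle_of_list [0,1,3] = cycle_comm [0,4,3] [1,2,3::nat]"
    and "cycle_of_list [0,2,1] = cycle_comm [0,2,4] [0,1,3::nat]"
    and "cycle_of_list [0,2,4] = cycle_comm [0,2,1] [0,4,3::nat]"
    and "cycle_of_list [0,4,3] = cycle_comm [0,1,3] [2,3,4::nat]"
    unfolding cycle_comm_def
    by (rule ext_less_5; (elim less_5_cases[elim_format] disjE; simp add: transpose_def)?;
        simp add: id_outside_supp)+
  then show ?thesis using assms by (auto simp: a5_cycles_def)
qed

section \<open>Groups containing the symmetric group of \<open>\<nat>\<close>\<close>

locale sym_nat_embedding = group G for G (structure) +
  fixes \<rho> :: "(nat \<Rightarrow> nat) \<Rightarrow> 'a"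
  assumes rep_closed: "bij \<sigma> \<Longrightarrow> \<rho> \<sigma> \<in> carrier G"
    and rep_comp: "bij \<sigma> \<Longrightarrow> bij \<tau> \<Longrightarrow> \<rho> (\<sigma> \<circ> \<tau>) = \<rho> \<sigma> \<otimes> \<rho> \<tau>"
    and rep_id: "\<rho> id = \<one>"
    and rep_faithful: "bij \<sigma> \<Longrightarrow> \<sigma> x \<noteq> x \<Longrightarrow> \<rho> \<sigma> \<noteq> \<one>"
begin

lemma rep_funpow: "bij \<sigma> \<Longrightarrow> \<rho> (\<sigma> ^^ n) = \<rho> \<sigma> [^] n"
proof (induction n)
  case (Suc n)
  have "\<rho> (\<sigma> ^^ Suc n) = \<rho> (\<sigma> \<circ> \<sigma> ^^ n)" by simp
  also have "\<dots> = \<rho> \<sigma> \<otimes> \<rho> \<sigma> [^] n"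
    using Suc by (simp add: rep_comp bij_betw_funpow)
  also have "\<dots> = \<rho> \<sigma> [^] Suc n"
    using Suc.prems rep_closed by (metis nat_pow_Suc2)
  finally show ?case .
qed (simp add: rep_id)

lemma rep_inverse: "bij \<sigma> \<Longrightarrow> bij \<tau> \<Longrightarrow> \<tau> \<circ> \<sigma> = id \<Longrightarrow> inv (\<rho> \<sigma>) = \<rho> \<tau>"
  by (intro inv_equality) (simp_all add: rep_comp[symmetric] rep_id rep_closed)

lemma rep_block_shift_pow:
  assumes "t permutes {..<5}" "t ^^ 3 = id"
  shows "\<rho> (block_shift A (3 ^ k) t) [^] (3 ^ Suc k :: nat) = \<one>"
    and "\<rho> (block_shift A (3 ^ k) t) [^] (3 ^ k :: nat) = \<rho> (block_perm A (3 ^ k) t)"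
proof -
  have b: "bij (block_shift A (3 ^ k) t)" using bij_block_shift[OF assms] by simp
  have "block_shift A (3 ^ k) t ^^ (3 ^ Suc k) = id"
    using block_shift_funpow_3L[OF assms, of "3 ^ k" A] by (simp add: mult.commute)
  then show "\<rho> (block_shift A (3 ^ k) t) [^] (3 ^ Suc k :: nat) = \<one>"
    using rep_funpow[OF b] rep_id by metis
  show "\<rho> (block_shift A (3 ^ k) t) [^] (3 ^ k :: nat) = \<rho> (block_perm A (3 ^ k) t)"
    using rep_funpow[OF b] block_shift_funpow_L[OF _ assms(1), of "3 ^ k" A]
    by (metis zero_less_numeral zero_less_power)
qed

lemma rep_block_perm_commutator:
  fixes A :: "nat set" and L :: nat
  assumes "as \<in> set a5_cycles" "bs \<in> set a5_cycles"
  defines "a \<equiv> block_perm A L (cycle_of_list as)" and "b \<equiv> block_perm A L (cycle_of_list bs)"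
  shows "\<rho> (block_perm A L (cycle_comm as bs)) = \<rho> a \<otimes> \<rho> b \<otimes> inv (\<rho> a) \<otimes> inv (\<rho> b)"
proof -
  note perm = a5_cycle_permutes[OF assms(1)] a5_cycle_permutes[OF assms(2)]
  note cube = a5_cycle_cube[OF assms(1)] a5_cycle_cube[OF assms(2)]
  have bij: "bij a" "bij b"
    unfolding a_def b_def using perm cube by (simp_all add: bij_block_perm)
  have "block_perm A L (cycle_comm as bs) = a \<circ> b \<circ> (a \<circ> a) \<circ> (b \<circ> b)"
    unfolding cycle_comm_def a_def b_def using perm
    by (simp add: block_perm_comp permutes_compose o_assoc)
  moreover have "inv (\<rho> a) = \<rho> (a \<circ> a)" "inv (\<rho> b) = \<rho> (b \<circ> b)"
    unfolding a_def b_def using perm cube bij[unfolded a_def b_def]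
    by (simp_all add: rep_inverse bij_comp block_perm_cube_comp)
  ultimately show ?thesis using bij by (simp add: rep_comp bij_comp)
qed

lemma not_residually_finite: "\<not> residually_finite G"
proof -
  let ?t = "cycle_of_list [2, 3, 4 :: nat]"
  have "[2, 3, 4] \<in> set a5_cycles" by (simp add: a5_cycles_def)
  then have t: "?t permutes {..<5}" "?t ^^ 3 = id"
    by (simp_all only: a5_cycle_permutes a5_cycle_cube)
  let ?c = "\<rho> (block_perm UNIV 1 ?t)"
  show ?thesis
  proof (rule not_residually_finite_if_pow_roots)
    show "Factorial_Ring.prime (3::nat)" by simp
    show "?c \<in> carrier G" using rep_closed bij_block_perm[OF t] by blast
    show "?c \<noteq> \<one>"
      using rep_faithful[OF bij_block_perm[OF t]] block_perm_moves[of 2 ?t UNIV 1] by simp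
    fix k
    show "has_pow_root G 3 k ?c"
      unfolding has_pow_root_def using rep_block_shift_pow[OF t, of UNIV k]
        block_perm_UNIV rep_closed[OF bij_block_shift[OF t]] by (metis zero_less_numeral zero_less_power)
  qed
qed

definition finitary :: "'a set" where
  "finitary = \<rho> ` {\<sigma>. permutation \<sigma>}"

lemma subgroup_finitary: "subgroup finitary G"
proof (rule subgroupI)
  show "finitary \<subseteq> carrier G"
    using rep_closed by (auto simp: finitary_def permutation)
  show "finitary \<noteq> {}" by (auto simp: finitary_def)
next
  fix a assume "a \<in> finitary"
  then obtain \<sigma> where \<sigma>: "a = \<rho> \<sigma>" "permutation \<sigma>" by (auto simp: finitary_def)
  then have "inv a = \<rho> (inv_into UNIV \<sigma>)"
    using permutation_bijective[OF \<sigma>(2)]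
    by (simp add: rep_inverse bij_imp_bij_inv bij_is_inj)
  then show "inv a \<in> finitary"
    using permutation_inverse[OF \<sigma>(2)] by (auto simp: finitary_def)
next
  fix a b assume "a \<in> finitary" "b \<in> finitary"
  then obtain \<sigma> \<tau> where \<sigma>\<tau>: "a = \<rho> \<sigma>" "permutation \<sigma>" "b = \<rho> \<tau>" "permutation \<tau>"
    by (auto simp: finitary_def)
  then have "a \<otimes> b = \<rho> (\<sigma> \<circ> \<tau>)" by (simp add: rep_comp permutation_bijective)
  then show "a \<otimes> b \<in> finitary"
    using permutation_compose[OF \<sigma>\<tau>(2,4)] by (simp add: finitary_def)
qed

lemma finitary_torsion: "g \<in> finitary \<Longrightarrow> \<exists>n>0. g [^] (n::nat) = \<one>"
proof -
  assume "g \<in> finitary"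
  then obtain \<sigma> where \<sigma>: "g = \<rho> \<sigma>" "permutation \<sigma>" by (auto simp: finitary_def)
  then obtain n where "\<sigma> ^^ n = id" "n > 0" using permutation_is_nilpotent by blast
  then show ?thesis using \<sigma> rep_funpow[of \<sigma> n] rep_id permutation_bijective by metis
qed

lemma finitary_block_perm:
  "cs \<in> set a5_cycles \<Longrightarrow> \<rho> (block_perm {0} (3 ^ N) (cycle_of_list cs)) \<in> finitary"
  using permutation_block_perm[OF a5_cycle_permutes a5_cycle_cube] by (simp add: finitary_def)

lemma finitary_has_pow_root:
  assumes "cs \<in> set a5_cycles"
  shows "has_pow_root (G\<lparr>carrier := finitary\<rparr>) 3 N (\<rho> (block_perm {0} (3 ^ N) (cycle_of_list cs)))"
proof -
  note t = a5_cycle_permutes[OF assms] a5_cycle_cube[OF assms]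
  have "\<rho> (block_shift {0} (3 ^ N) (cycle_of_list cs)) \<in> finitary"
    using permutation_block_shift[OF t] by (simp add: finitary_def)
  then show ?thesis
    unfolding has_pow_root_def using rep_block_shift_pow[OF t, of "{0}" N]
    by (simp add: nat_pow_consistent[symmetric]) blast
qed

lemma finitary_not_virtually_solvable: "\<not> virtually_solvable (G\<lparr>carrier := finitary\<rparr>)"
proof -
  let ?H = "G\<lparr>carrier := finitary\<rparr>"
  interpret H: group ?H
    by (rule subgroup.subgroup_is_group[OF subgroup_finitary is_group])
  show ?thesis
  proof (rule H.not_virtually_solvable_if_perfect_pow_roots)
    show "Factorial_Ring.prime (3::nat)" by simp
    fix N :: nat
    let ?d = "\<lambda>cs. \<rho> (block_perm {0} (3 ^ N) (cycle_of_list cs))"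
    let ?S = "?d ` set a5_cycles"
    have S: "?S \<subseteq> finitary" using finitary_block_perm by blast
    have mem: "[2, 3, 4] \<in> set a5_cycles" by (simp add: a5_cycles_def)
    have "block_perm {0} (3 ^ N) (cycle_of_list [2, 3, 4]) 2 \<noteq> 2"
      by (rule block_perm_moves) simp_all
    with mem have "?d [2, 3, 4] \<noteq> \<one>"
      using rep_faithful[OF bij_block_perm[OF a5_cycle_permutes a5_cycle_cube]] by blast
    moreover have "?d [2, 3, 4] \<in> ?S" using mem by (rule imageI)
    ultimately have nontrivial: "?S \<noteq> {}" "?S \<noteq> {\<one>\<^bsub>?H\<^esub>}" by auto
    have "\<exists>a\<in>?S. \<exists>b\<in>?S. s = a \<otimes>\<^bsub>?H\<^esub> b \<otimes>\<^bsub>?H\<^esub> inv\<^bsub>?H\<^esub> a \<otimes>\<^bsub>?H\<^esub> inv\<^bsub>?H\<^esub> b"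
      if "s \<in> ?S" for s
    proof -
      obtain cs where cs: "cs \<in> set a5_cycles" "s = ?d cs" using \<open>s \<in> ?S\<close> by blast
      then obtain as bs where ab: "as \<in> set a5_cycles" "bs \<in> set a5_cycles"
        "cycle_of_list cs = cycle_comm as bs"
        using a5_cycle_commutator by blast
      then have "s = ?d as \<otimes> ?d bs \<otimes> inv (?d as) \<otimes> inv (?d bs)"
        using cs rep_block_perm_commutator by simp
      moreover have "?d as \<in> finitary" "?d bs \<in> finitary" using ab finitary_block_perm by blast+
      ultimately have "s = ?d as \<otimes>\<^bsub>?H\<^esub> ?d bs \<otimes>\<^bsub>?H\<^esub> inv\<^bsub>?H\<^esub> ?d as \<otimes>\<^bsub>?H\<^esub> inv\<^bsub>?H\<^esub> ?d bs"
        by (simp add: m_inv_consistent[OF subgroup_finitary])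
      then show ?thesis using ab by blast
    qed
    moreover have "N < 3 ^ Suc N" using less_prime_power_self[of 3 "Suc N"] by simp
    ultimately show "\<exists>S\<subseteq>carrier ?H. S \<noteq> {} \<and> S \<noteq> {\<one>\<^bsub>?H\<^esub>}
       \<and> (\<forall>s\<in>S. \<exists>a\<in>S. \<exists>b\<in>S. s = a \<otimes>\<^bsub>?H\<^esub> b \<otimes>\<^bsub>?H\<^esub> inv\<^bsub>?H\<^esub> a \<otimes>\<^bsub>?H\<^esub> inv\<^bsub>?H\<^esub> b)
       \<and> (\<forall>s\<in>S. \<exists>k. N < 3 ^ Suc k \<and> has_pow_root ?H 3 k s)"
      using S nontrivial finitary_has_pow_root by (intro exI[of _ ?S]) auto
  qed
qed

lemma not_tits_alternative: "\<not> tits_alternative G"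
proof -
  interpret H: group "G\<lparr>carrier := finitary\<rparr>"
    by (rule subgroup.subgroup_is_group[OF subgroup_finitary is_group])
  have "\<not> has_nonabelian_free_subgroup (G\<lparr>carrier := finitary\<rparr>)"
    using finitary_torsion
    by (intro H.torsion_imp_no_nonabelian_free_subgroup) (simp add: nat_pow_consistent[symmetric])
  then show ?thesis
    using finitary_not_virtually_solvable subgroup_finitary by (auto simp: tits_alternative_def)
qed

end

section \<open>\<open>Aut(F\<^sub>\<infinity>)\<close> and \<open>Out(F\<^sub>\<infinity>)\<close>\<close>

lemma sym_nat_embedding_Aut: "sym_nat_embedding (AutoGroup F_infty) perm_auto"
proof (intro sym_nat_embedding.intro sym_nat_embedding_axioms.intro)
  show "group (AutoGroup F_infty)" by (rule group.AutoGroup[OF group_free_group])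
  fix \<sigma> \<tau> :: "nat \<Rightarrow> nat" and x
  show "bij \<sigma> \<Longrightarrow> perm_auto \<sigma> \<in> carrier (AutoGroup F_infty)"
    by (simp add: AutoGroup_carrier perm_auto_auto)
  show "bij \<sigma> \<Longrightarrow> bij \<tau> \<Longrightarrow> perm_auto (\<sigma> \<circ> \<tau>) = perm_auto \<sigma> \<otimes>\<^bsub>AutoGroup F_infty\<^esub> perm_auto \<tau>"
    by (rule perm_auto_comp)
  show "perm_auto id = \<one>\<^bsub>AutoGroup F_infty\<^esub>" by (rule perm_auto_id)
  show "\<sigma> x \<noteq> x \<Longrightarrow> perm_auto \<sigma> \<noteq> \<one>\<^bsub>AutoGroup F_infty\<^esub>"
    using perm_auto_not_inner[of \<sigma> x] subgroup.one_closed[OF normal_imp_subgroup[OF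
        group.inner_auto_normal[OF group_free_group]]] by metis
qed

definition perm_out :: "(nat \<Rightarrow> nat) \<Rightarrow> ((nat \<times> bool) list \<Rightarrow> (nat \<times> bool) list) set" where
  "perm_out \<sigma> = inner_auto F_infty #>\<^bsub>AutoGroup F_infty\<^esub> perm_auto \<sigma>"

lemma sym_nat_embedding_Out: "sym_nat_embedding (OutGroup F_infty) perm_out"
proof -
  interpret F: group F_infty by (rule group_free_group)
  interpret A: sym_nat_embedding "AutoGroup F_infty" perm_auto by (rule sym_nat_embedding_Aut)
  interpret N: normal "inner_auto F_infty" "AutoGroup F_infty" by (rule F.inner_auto_normal)
  show ?thesis
  proof (intro sym_nat_embedding.intro sym_nat_embedding_axioms.intro)
    show "group (OutGroup F_infty)" by (rule F.group_OutGroup)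
    fix \<sigma> \<tau> :: "nat \<Rightarrow> nat" and x
    show "bij \<sigma> \<Longrightarrow> perm_out \<sigma> \<in> carrier (OutGroup F_infty)"
      unfolding perm_out_def OutGroup_def FactGroup_def
      using A.rcosetsI[OF N.subset A.rep_closed] by simp
    show "bij \<sigma> \<Longrightarrow> bij \<tau> \<Longrightarrow> perm_out (\<sigma> \<circ> \<tau>) = perm_out \<sigma> \<otimes>\<^bsub>OutGroup F_infty\<^esub> perm_out \<tau>"
      unfolding perm_out_def OutGroup_def FactGroup_def
      by (simp add: N.rcos_sum A.rep_closed A.rep_comp)
    show "perm_out id = \<one>\<^bsub>OutGroup F_infty\<^esub>"
      unfolding perm_out_def OutGroup_def FactGroup_def
      by (simp add: A.rep_id A.coset_mult_one N.subset)
    assume \<sigma>: "bij \<sigma>" and x: "\<sigma> x \<noteq> x"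
    have "perm_auto \<sigma> \<in> perm_out \<sigma>"
      unfolding perm_out_def by (rule A.rcos_self[OF A.rep_closed[OF \<sigma>] N.subgroup_axioms])
    then show "perm_out \<sigma> \<noteq> \<one>\<^bsub>OutGroup F_infty\<^esub>"
      using perm_auto_not_inner[of \<sigma> x, OF x] by (auto simp: OutGroup_def FactGroup_def)
  qed
qed

theorem mainTheorem6:
  shows "\<not> residually_finite (AutoGroup F_infty) \<and> \<not> residually_finite (OutGroup F_infty)
       \<and> \<not> tits_alternative (AutoGroup F_infty) \<and> \<not> tits_alternative (OutGroup F_infty)"
  using sym_nat_embedding.not_residually_finite[OF sym_nat_embedding_Aut]
    sym_nat_embedding.not_residually_finite[OF sym_nat_embedding_Out]
    sym_nat_embedding.not_tits_alternative[OF sym_nat_embedding_Aut]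
    sym_nat_embedding.not_tits_alternative[OF sym_nat_embedding_Out]
  by blast

end
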